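(* Let $H \in \mathrm{Herm}(\mathcal{H})$, $\mathcal{A}$ an ancillary Hilbert space and $H' \in \mathrm{Herm}(\mathcal{H}\otimes\mathcal{A})$. Suppose $(H',\mathcal{A})$ is an $(\eta,\epsilon)$-gadget for $H$ with $U$, $P$ and $P' = U(\mathbb{I}\otimes P)U^\dagger$ as in the definition, where $U$ is the direct rotation between $\mathbb{I}\otimes P$ and $P'$. Assume $\|H'\| \le J'$ and $\|(\mathbb{I}\otimes P)H'(\mathbb{I}\otimes P^\perp)\| \le J_O'$. Then $$\|(\mathbb{I}\otimes P)H'(\mathbb{I}\otimes P)\| \le \|H\| + O(\epsilon + \eta J_O' + \eta^2 J').$$
   Context: $\|\cdot\|$ is the operator norm, $P^\perp = \mathbb{I} - P$. $(H',\mathcal{A})$ is an $(\eta,\epsilon)$-gadget for $H$ if there exist an orthogonal projector $P\neq 0$ on $\mathcal{A}$ and a unitary $U$ on $\mathcal{H}\otimes\mathcal{A}$ with $\|U - \mathbb{I}\| \le \eta$ and $\|P'H'P' - U(H\otimes P)U^\dagger\| \le \epsilon$, where $P' = U(\mathbb{I}\otimes P)U^\dagger$. Direct rotation: for orthogonal projectors $P_1, P_2$ of equal rank with $\|P_1 - P_2\| < 1$, let $R_1 = \mathbb{I} - 2P_1$, $R_2 = \mathbb{I} - 2P_2$; the direct rotation from $P_1$ to $P_2$ is $\sqrt{R_2R_1}$, with the square root taken with branch cut along the negative real axis and $\sqrt{1} = 1$. *)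

theory Defs
  imports "Jordan_Normal_Form.Char_Poly" "Jordan_Normal_Form.DL_Rank"
begin

definition vnorm :: "complex vec \<Rightarrow> real" where
  "vnorm v = sqrt (\<Sum>i<dim_vec v. (cmod (v $ i))^2)"

definition opnorm :: "complex mat \<Rightarrow> real" where
  "opnorm A = Sup {vnorm (A *\<^sub>v v) | v. v \<in> carrier_vec (dim_col A) \<and> vnorm v \<le> 1}"

definition adj :: "complex mat \<Rightarrow> complex mat" where
  "adj A = mat (dim_col A) (dim_row A) (\<lambda>(i,j). cnj (A $$ (j,i)))"

definition hermitian :: "nat \<Rightarrow> complex mat \<Rightarrow> bool" where
  "hermitian n A \<longleftrightarrow> A \<in> carrier_mat n n \<and> adj A = A"

definition unitary :: "nat \<Rightarrow> complex mat \<Rightarrow> bool" where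
  "unitary n U \<longleftrightarrow> U \<in> carrier_mat n n \<and> U * adj U = 1\<^sub>m n \<and> adj U * U = 1\<^sub>m n"

definition orth_proj :: "nat \<Rightarrow> complex mat \<Rightarrow> bool" where
  "orth_proj n P \<longleftrightarrow> hermitian n P \<and> P * P = P"

text \<open>Kronecker (tensor) product; index (i,a) of H\<otimes>A is encoded as i * dim A + a.\<close>
definition kron :: "complex mat \<Rightarrow> complex mat \<Rightarrow> complex mat" where
  "kron A B = mat (dim_row A * dim_row B) (dim_col A * dim_col B)
     (\<lambda>(i,j). A $$ (i div dim_row B, j div dim_col B) * B $$ (i mod dim_row B, j mod dim_col B))"

definition mrank :: "complex mat \<Rightarrow> nat" where
  "mrank A = vec_space.rank (dim_row A) A"

text \<open>Direct rotation from P1 to P2: sqrt(R2 R1), principal branch (cut along the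
  negative real axis, sqrt 1 = 1). The principal square root of a matrix W with no
  eigenvalues on the closed negative real axis is the unique S with S^2 = W all of whose
  eigenvalues lie in the open right half plane.\<close>
definition direct_rotation :: "nat \<Rightarrow> complex mat \<Rightarrow> complex mat \<Rightarrow> complex mat \<Rightarrow> bool" where
  "direct_rotation n P1 P2 U \<longleftrightarrow>
     orth_proj n P1 \<and> orth_proj n P2 \<and> mrank P1 = mrank P2 \<and> opnorm (P1 - P2) < 1 \<and>
     U \<in> carrier_mat n n \<and>
     U * U = (1\<^sub>m n - 2 \<cdot>\<^sub>m P2) * (1\<^sub>m n - 2 \<cdot>\<^sub>m P1) \<and>
     (\<forall>k. eigenvalue U k \<longrightarrow> Re k > 0)"

definition gadget_with :: "nat \<Rightarrow> nat \<Rightarrow> complex mat \<Rightarrow> complex mat \<Rightarrow> real \<Rightarrow> real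
    \<Rightarrow> complex mat \<Rightarrow> complex mat \<Rightarrow> bool" where
  "gadget_with n m H H' \<eta> \<epsilon> P U \<longleftrightarrow>
     orth_proj m P \<and> P \<noteq> 0\<^sub>m m m \<and> unitary (n*m) U \<and>
     opnorm (U - 1\<^sub>m (n*m)) \<le> \<eta> \<and>
     opnorm (U * kron (1\<^sub>m n) P * adj U * H' * (U * kron (1\<^sub>m n) P * adj U)
             - U * kron H P * adj U) \<le> \<epsilon>"

end

theory Submission
  imports Defs "HOL-Analysis.L2_Norm"
begin

(* Write Q = I (x) P, E = U - I and X = Q (adj U) H' U Q.  Conjugating the gadget condition
   by adj U gives ||X|| <= ||H|| + eps.  Expanding U = I + E,
     X = Q H' Q + T + adj T + Q (adj E) H' E Q,   where T = Q (adj E) H' Q,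
   and the last term is at most eta^2 J'.  Splitting T = (Q (adj E) Q) H' Q + Q (adj E) (I - Q) H' Q,
   the second piece is at most eta J_O'.  The first is O(eta^2 J') because U is the direct
   rotation: U^2 = R2 R1 with R2 = U R1 (adj U) forces U = R1 (adj U) R1, hence
   Q U Q = Q (adj U) Q, and then Q (adj E) E Q = 2 Q - Q U Q - Q (adj U) Q = -2 Q (adj E) Q
   has norm at most eta^2. *)

lemma square_mult_assoc:
  "A \<in> carrier_mat N N \<Longrightarrow> B \<in> carrier_mat N N \<Longrightarrow> C \<in> carrier_mat N N \<Longrightarrow> A * B * C = A * (B * C)"
  by (rule assoc_mult_mat) auto

lemma square_mult_add_distrib:
  "A \<in> carrier_mat N N \<Longrightarrow> B \<in> carrier_mat N N \<Longrightarrow> C \<in> carrier_mat N N \<Longrightarrow> A * (B + C) = A * B + A * C"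
  by (rule mult_add_distrib_mat) auto

lemma square_add_mult_distrib:
  "A \<in> carrier_mat N N \<Longrightarrow> B \<in> carrier_mat N N \<Longrightarrow> C \<in> carrier_mat N N \<Longrightarrow> (B + C) * A = B * A + C * A"
  by (rule add_mult_distrib_mat) auto

lemma square_mult_minus_distrib:
  "(A :: 'a :: ring mat) \<in> carrier_mat N N \<Longrightarrow> B \<in> carrier_mat N N \<Longrightarrow> C \<in> carrier_mat N N \<Longrightarrow>
   A * (B - C) = A * B - A * C"
  by (rule mult_minus_distrib_mat) auto

lemma square_minus_mult_distrib:
  "(A :: 'a :: ring mat) \<in> carrier_mat N N \<Longrightarrow> B \<in> carrier_mat N N \<Longrightarrow> C \<in> carrier_mat N N \<Longrightarrow>
   (B - C) * A = B * A - C * A"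
  by (rule minus_mult_distrib_mat) auto

lemma square_mult_smult:
  "A \<in> carrier_mat N N \<Longrightarrow> B \<in> carrier_mat N N \<Longrightarrow> A * (k \<cdot>\<^sub>m B) = (k :: 'a :: comm_ring) \<cdot>\<^sub>m (A * B)"
  by (rule mult_smult_distrib) auto

lemma square_smult_mult:
  "A \<in> carrier_mat N N \<Longrightarrow> B \<in> carrier_mat N N \<Longrightarrow> (k \<cdot>\<^sub>m A) * B = (k :: 'a :: comm_ring) \<cdot>\<^sub>m (A * B)"
  by (rule mult_smult_assoc_mat) auto

lemma square_mult_carrier [simp]: "A \<in> carrier_mat N N \<Longrightarrow> B \<in> carrier_mat N N \<Longrightarrow> A * B \<in> carrier_mat N N"
  by (rule mult_carrier_mat)

lemma square_left_mult_one: "(A :: 'a :: semiring_1 mat) \<in> carrier_mat N N \<Longrightarrow> 1\<^sub>m N * A = A"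
  by (rule left_mult_one_mat)

lemma square_right_mult_one: "(A :: 'a :: semiring_1 mat) \<in> carrier_mat N N \<Longrightarrow> A * 1\<^sub>m N = A"
  by (rule right_mult_one_mat)

(* Stated with a single dimension N, so that after instantiating N every carrier side
   condition is ground and the simplifier can discharge it. *)
lemmas square_mat_algebra = square_mult_assoc square_mult_add_distrib square_add_mult_distrib
  square_mult_minus_distrib square_minus_mult_distrib square_mult_smult square_smult_mult
  square_mult_carrier square_left_mult_one square_right_mult_one

lemma adj_dims [simp]: "dim_row (adj A) = dim_col A" "dim_col (adj A) = dim_row A"
  by (auto simp: adj_def)

lemma adj_index [simp]: "i < dim_col A \<Longrightarrow> j < dim_row A \<Longrightarrow> adj A $$ (i,j) = cnj (A $$ (j,i))"
  by (simp add: adj_def)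

lemma adj_carrier [simp]: "A \<in> carrier_mat r c \<Longrightarrow> adj A \<in> carrier_mat c r"
  unfolding carrier_mat_def by simp

lemma adj_adj [simp]: "adj (adj A) = A"
  by (intro eq_matI) auto

lemma adj_one [simp]: "adj (1\<^sub>m n) = 1\<^sub>m n"
  by (intro eq_matI) auto

lemma adj_minus: "A \<in> carrier_mat r c \<Longrightarrow> B \<in> carrier_mat r c \<Longrightarrow> adj (A - B) = adj A - adj B"
  by (intro eq_matI) auto

lemma adj_mult:
  assumes A: "A \<in> carrier_mat r k" and B: "B \<in> carrier_mat k c"
  shows "adj (A * B) = adj B * adj A"
proof (rule eq_matI)
  fix i j assume "i < dim_row (adj B * adj A)" and "j < dim_col (adj B * adj A)"
  then have i: "i < c" and j: "j < r" using A B by auto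
  have "adj (A * B) $$ (i,j) = cnj (\<Sum>l\<in>{0..<k}. A $$ (j,l) * B $$ (l,i))"
    using A B i j by (simp add: scalar_prod_def)
  also have "\<dots> = (\<Sum>l\<in>{0..<k}. adj B $$ (i,l) * adj A $$ (l,j))"
    using A B i j by (simp add: mult.commute)
  also have "\<dots> = (adj B * adj A) $$ (i,j)"
    using A B i j by (simp add: scalar_prod_def)
  finally show "adj (A * B) $$ (i,j) = (adj B * adj A) $$ (i,j)" .
qed (use A B in auto)

lemma unitary_adj: "unitary n U \<Longrightarrow> unitary n (adj U)"
  by (simp add: unitary_def)

lemma unitary_adj_mult_cancel:
  assumes "unitary n U" and "X \<in> carrier_mat n n"
  shows "adj U * (U * X) = X"
  using assms by (simp add: unitary_def flip: square_mult_assoc[where N=n])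

lemma orth_proj_complement:
  assumes "orth_proj n Q"
  shows "orth_proj n (1\<^sub>m n - Q)"
proof -
  have Q: "Q \<in> carrier_mat n n" "adj Q = Q" "Q * Q = Q"
    using assms by (auto simp: orth_proj_def hermitian_def)
  have "(1\<^sub>m n - Q) * (1\<^sub>m n - Q) = 1\<^sub>m n - Q - (Q - Q)"
    using Q by (simp add: square_mat_algebra[where N=n] minus_carrier_mat)
  also have "\<dots> = 1\<^sub>m n - Q"
    using Q by (intro eq_matI) auto
  finally show ?thesis
    using Q adj_minus[of "1\<^sub>m n" n n Q] by (simp add: orth_proj_def hermitian_def minus_carrier_mat)
qed

lemma vnorm_L2_set: "vnorm v = L2_set (\<lambda>i. cmod (v $ i)) {..<dim_vec v}"
  by (simp add: vnorm_def L2_set_def)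

lemma vnorm_nonneg: "0 \<le> vnorm v"
  by (simp add: vnorm_def sum_nonneg)

lemma vnorm_square: "(vnorm v)^2 = (\<Sum>i<dim_vec v. (cmod (v $ i))^2)"
  by (simp add: vnorm_def sum_nonneg)

lemma vnorm_zero_vec: "vnorm (0\<^sub>v n) = 0"
  by (simp add: vnorm_def)

lemma cmod_index_le_vnorm: "i < dim_vec v \<Longrightarrow> cmod (v $ i) \<le> vnorm v"
  unfolding vnorm_L2_set by (rule member_le_L2_set) auto

lemma vnorm_smult: "vnorm (k \<cdot>\<^sub>v v) = cmod k * vnorm v"
proof -
  have "(vnorm (k \<cdot>\<^sub>v v))^2 = (cmod k * vnorm v)^2"
    unfolding power_mult_distrib vnorm_square
    by (simp add: sum_distrib_left norm_mult power_mult_distrib)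
  then show ?thesis
    by (simp add: vnorm_nonneg power2_eq_imp_eq)
qed

lemma vnorm_add_le:
  assumes "dim_vec u = dim_vec w"
  shows "vnorm (u + w) \<le> vnorm u + vnorm w"
proof -
  have "vnorm (u + w) = L2_set (\<lambda>i. cmod (u $ i + w $ i)) {..<dim_vec w}"
    unfolding vnorm_L2_set using assms by (intro L2_set_cong) auto
  also have "\<dots> \<le> L2_set (\<lambda>i. cmod (u $ i) + cmod (w $ i)) {..<dim_vec w}"
    by (intro L2_set_mono) (auto intro: norm_triangle_ineq)
  also have "\<dots> \<le> vnorm u + vnorm w"
    unfolding vnorm_L2_set using assms by (simp add: L2_set_triangle_ineq)
  finally show ?thesis .
qed

lemma vnorm_diff_le:
  assumes "dim_vec u = dim_vec w"
  shows "vnorm (u - w) \<le> vnorm u + vnorm w"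
proof -
  have "vnorm (u - w) = L2_set (\<lambda>i. cmod (u $ i - w $ i)) {..<dim_vec w}"
    unfolding vnorm_L2_set using assms by (intro L2_set_cong) auto
  also have "\<dots> \<le> L2_set (\<lambda>i. cmod (u $ i) + cmod (w $ i)) {..<dim_vec w}"
    by (intro L2_set_mono) (auto intro: norm_triangle_ineq4)
  also have "\<dots> \<le> vnorm u + vnorm w"
    unfolding vnorm_L2_set using assms by (simp add: L2_set_triangle_ineq)
  finally show ?thesis .
qed

lemma cscalar_prod_self: "v \<bullet>c v = complex_of_real ((vnorm v)^2)"
  unfolding vnorm_square scalar_prod_def of_real_sum
  by (rule sum.cong) (auto simp flip: complex_norm_square)

lemma cmod_cscalar_prod_le:
  assumes "dim_vec u = dim_vec v"
  shows "cmod (u \<bullet>c v) \<le> vnorm u * vnorm v"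
proof -
  have "cmod (u \<bullet>c v) \<le> (\<Sum>i<dim_vec v. cmod (u $ i * cnj (v $ i)))"
    unfolding scalar_prod_def by (auto simp: lessThan_atLeast0 intro: norm_sum)
  also have "\<dots> = (\<Sum>i<dim_vec v. \<bar>cmod (u $ i)\<bar> * \<bar>cmod (v $ i)\<bar>)"
    by (simp add: norm_mult)
  also have "\<dots> \<le> L2_set (\<lambda>i. cmod (u $ i)) {..<dim_vec v} * L2_set (\<lambda>i. cmod (v $ i)) {..<dim_vec v}"
    by (rule L2_set_mult_ineq)
  finally show ?thesis using assms by (simp add: vnorm_L2_set)
qed

lemma cscalar_prod_mult_mat_vec:
  assumes A: "A \<in> carrier_mat r c" and v: "v \<in> carrier_vec c" and w: "w \<in> carrier_vec r"
  shows "(A *\<^sub>v v) \<bullet>c w = v \<bullet>c (adj A *\<^sub>v w)"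
proof -
  have "(A *\<^sub>v v) \<bullet>c w = (\<Sum>i<r. \<Sum>j<c. A $$ (i,j) * v $ j * cnj (w $ i))"
    using A v w by (simp add: scalar_prod_def lessThan_atLeast0 sum_distrib_right)
  also have "\<dots> = (\<Sum>j<c. \<Sum>i<r. A $$ (i,j) * v $ j * cnj (w $ i))"
    by (rule sum.swap)
  also have "\<dots> = v \<bullet>c (adj A *\<^sub>v w)"
    using A v w
    by (simp add: scalar_prod_def lessThan_atLeast0 sum_distrib_left mult.commute mult.left_commute)
  finally show ?thesis .
qed

section \<open>Operator norm\<close>

lemma vnorm_mult_mat_vec_le_entries:
  assumes "v \<in> carrier_vec (dim_col A)"
  shows "vnorm (A *\<^sub>v v) \<le> (\<Sum>i<dim_row A. \<Sum>j<dim_col A. cmod (A $$ (i,j))) * vnorm v"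
proof -
  have row: "cmod ((A *\<^sub>v v) $ i) \<le> (\<Sum>j<dim_col A. cmod (A $$ (i,j))) * vnorm v"
    if i: "i < dim_row A" for i
  proof -
    have "cmod ((A *\<^sub>v v) $ i) \<le> (\<Sum>j<dim_col A. cmod (A $$ (i,j) * v $ j))"
      using i assms by (auto simp: scalar_prod_def lessThan_atLeast0 intro: norm_sum)
    also have "\<dots> \<le> (\<Sum>j<dim_col A. cmod (A $$ (i,j)) * vnorm v)"
      using assms by (intro sum_mono) (auto simp: norm_mult intro!: mult_left_mono cmod_index_le_vnorm)
    finally show ?thesis by (simp add: sum_distrib_right)
  qed
  have "vnorm (A *\<^sub>v v) \<le> (\<Sum>i<dim_row A. cmod ((A *\<^sub>v v) $ i))"
    unfolding vnorm_L2_set dim_mult_mat_vec by (rule L2_set_le_sum) simp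
  also have "\<dots> \<le> (\<Sum>i<dim_row A. (\<Sum>j<dim_col A. cmod (A $$ (i,j))) * vnorm v)"
    by (intro sum_mono row) auto
  finally show ?thesis by (simp add: sum_distrib_right)
qed

lemma opnorm_bdd_above:
  "bdd_above {vnorm (A *\<^sub>v v) | v. v \<in> carrier_vec (dim_col A) \<and> vnorm v \<le> 1}"
proof -
  let ?K = "\<Sum>i<dim_row A. \<Sum>j<dim_col A. cmod (A $$ (i,j))"
  have "vnorm (A *\<^sub>v v) \<le> ?K" if "v \<in> carrier_vec (dim_col A)" "vnorm v \<le> 1" for v
    using vnorm_mult_mat_vec_le_entries[OF that(1)] that(2)
    by (smt (verit) mult_left_le sum_nonneg norm_ge_zero)
  then show ?thesis by (auto simp: bdd_above_def)
qed

lemma opnorm_upper: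
  "v \<in> carrier_vec (dim_col A) \<Longrightarrow> vnorm v \<le> 1 \<Longrightarrow> vnorm (A *\<^sub>v v) \<le> opnorm A"
  unfolding opnorm_def by (rule cSup_upper[OF _ opnorm_bdd_above]) auto

lemma opnorm_nonneg: "0 \<le> opnorm A"
proof -
  have "A *\<^sub>v 0\<^sub>v (dim_col A) = 0\<^sub>v (dim_row A)" by (intro eq_vecI) auto
  then show ?thesis
    using opnorm_upper[of "0\<^sub>v (dim_col A)" A] by (simp add: vnorm_zero_vec)
qed

lemma vnorm_mult_mat_vec_le:
  assumes v: "v \<in> carrier_vec (dim_col A)"
  shows "vnorm (A *\<^sub>v v) \<le> opnorm A * vnorm v"
proof (cases "vnorm v = 0")
  case True
  then show ?thesis
    using vnorm_mult_mat_vec_le_entries[OF v] vnorm_nonneg[of "A *\<^sub>v v"] by simp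
next
  case False
  then have pos: "vnorm v > 0" using vnorm_nonneg[of v] by simp
  let ?u = "complex_of_real (1 / vnorm v) \<cdot>\<^sub>v v"
  have "A *\<^sub>v ?u = complex_of_real (1 / vnorm v) \<cdot>\<^sub>v (A *\<^sub>v v)"
    using v by (intro mult_mat_vec[of _ "dim_row A" "dim_col A"]) auto
  moreover have "vnorm (A *\<^sub>v ?u) \<le> opnorm A"
    using v pos by (intro opnorm_upper) (auto simp: vnorm_smult norm_divide)
  ultimately show ?thesis
    using pos by (simp add: vnorm_smult norm_divide divide_le_eq mult.commute)
qed

lemma opnorm_leI:
  assumes "0 \<le> c" and "\<And>v. v \<in> carrier_vec (dim_col A) \<Longrightarrow> vnorm (A *\<^sub>v v) \<le> c * vnorm v"
  shows "opnorm A \<le> c"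
  unfolding opnorm_def
proof (rule cSup_least)
  show "{vnorm (A *\<^sub>v v) |v. v \<in> carrier_vec (dim_col A) \<and> vnorm v \<le> 1} \<noteq> {}"
    by (auto intro!: exI[of _ "0\<^sub>v (dim_col A)"] simp: vnorm_zero_vec)
  fix x assume "x \<in> {vnorm (A *\<^sub>v v) |v. v \<in> carrier_vec (dim_col A) \<and> vnorm v \<le> 1}"
  then obtain v where v: "v \<in> carrier_vec (dim_col A)" "vnorm v \<le> 1" and x: "x = vnorm (A *\<^sub>v v)"
    by auto
  have "x \<le> c * vnorm v" using assms(2)[OF v(1)] x by simp
  also have "\<dots> \<le> c" using assms(1) v(2) by (simp add: mult_left_le)
  finally show "x \<le> c" .
qed

lemma opnorm_mult_le:
  assumes A: "A \<in> carrier_mat r k" and B: "B \<in> carrier_mat k c"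
  shows "opnorm (A * B) \<le> opnorm A * opnorm B"
proof (rule opnorm_leI)
  fix v :: "complex vec" assume "v \<in> carrier_vec (dim_col (A * B))"
  then have v: "v \<in> carrier_vec c" using B by simp
  have "vnorm ((A * B) *\<^sub>v v) = vnorm (A *\<^sub>v (B *\<^sub>v v))"
    using A B v by (simp add: assoc_mult_mat_vec)
  also have "\<dots> \<le> opnorm A * vnorm (B *\<^sub>v v)"
    using A B v by (intro vnorm_mult_mat_vec_le) auto
  also have "\<dots> \<le> opnorm A * (opnorm B * vnorm v)"
    using B v by (intro mult_left_mono vnorm_mult_mat_vec_le opnorm_nonneg) auto
  finally show "vnorm ((A * B) *\<^sub>v v) \<le> opnorm A * opnorm B * vnorm v"
    by (simp add: mult.assoc)
qed (simp add: opnorm_nonneg)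

lemma opnorm_mult_bounded:
  assumes "A \<in> carrier_mat r k" and "B \<in> carrier_mat k c"
    and "opnorm A \<le> a" and "opnorm B \<le> b"
  shows "opnorm (A * B) \<le> a * b"
  using opnorm_mult_le[OF assms(1,2)] assms(3,4) opnorm_nonneg[of A] opnorm_nonneg[of B]
  by (smt (verit) mult_mono)

lemma opnorm_add_le:
  assumes A: "A \<in> carrier_mat r c" and B: "B \<in> carrier_mat r c"
  shows "opnorm (A + B) \<le> opnorm A + opnorm B"
proof (rule opnorm_leI)
  fix v :: "complex vec" assume "v \<in> carrier_vec (dim_col (A + B))"
  then have v: "v \<in> carrier_vec c" using B by simp
  have "vnorm ((A + B) *\<^sub>v v) \<le> vnorm (A *\<^sub>v v) + vnorm (B *\<^sub>v v)"
    using A B v by (simp add: add_mult_distrib_mat_vec vnorm_add_le)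
  also have "\<dots> \<le> opnorm A * vnorm v + opnorm B * vnorm v"
    using A B v by (intro add_mono vnorm_mult_mat_vec_le) auto
  finally show "vnorm ((A + B) *\<^sub>v v) \<le> (opnorm A + opnorm B) * vnorm v"
    by (simp add: algebra_simps)
qed (simp add: opnorm_nonneg)

lemma opnorm_diff_le:
  assumes A: "A \<in> carrier_mat r c" and B: "B \<in> carrier_mat r c"
  shows "opnorm (A - B) \<le> opnorm A + opnorm B"
proof (rule opnorm_leI)
  fix v :: "complex vec" assume "v \<in> carrier_vec (dim_col (A - B))"
  then have v: "v \<in> carrier_vec c" using B by simp
  have "vnorm ((A - B) *\<^sub>v v) \<le> vnorm (A *\<^sub>v v) + vnorm (B *\<^sub>v v)"
    using A B v by (simp add: minus_mult_distrib_mat_vec vnorm_diff_le)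
  also have "\<dots> \<le> opnorm A * vnorm v + opnorm B * vnorm v"
    using A B v by (intro add_mono vnorm_mult_mat_vec_le) auto
  finally show "vnorm ((A - B) *\<^sub>v v) \<le> (opnorm A + opnorm B) * vnorm v"
    by (simp add: algebra_simps)
qed (simp add: opnorm_nonneg)

lemma opnorm_le_diff_add:
  assumes "A \<in> carrier_mat r c" and "B \<in> carrier_mat r c"
  shows "opnorm A \<le> opnorm (A - B) + opnorm B"
proof -
  have "A = (A - B) + B"
    using assms by (intro eq_matI) auto
  then show ?thesis
    using opnorm_add_le[of "A - B" r c B] assms by (simp add: minus_carrier_mat)
qed

lemma opnorm_smult_le: "opnorm (k \<cdot>\<^sub>m A) \<le> cmod k * opnorm A"
proof (rule opnorm_leI)
  fix v :: "complex vec" assume v: "v \<in> carrier_vec (dim_col (k \<cdot>\<^sub>m A))"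
  have "(k \<cdot>\<^sub>m A) *\<^sub>v v = k \<cdot>\<^sub>v (A *\<^sub>v v)"
    using v by (intro eq_vecI) (auto simp: scalar_prod_def sum_distrib_left mult.assoc)
  then have "vnorm ((k \<cdot>\<^sub>m A) *\<^sub>v v) = cmod k * vnorm (A *\<^sub>v v)"
    by (simp add: vnorm_smult)
  also have "\<dots> \<le> cmod k * (opnorm A * vnorm v)"
    using v by (intro mult_left_mono vnorm_mult_mat_vec_le) auto
  finally show "vnorm ((k \<cdot>\<^sub>m A) *\<^sub>v v) \<le> cmod k * opnorm A * vnorm v"
    by (simp add: mult.assoc)
qed (simp add: opnorm_nonneg)

(* Both sides of the adjoint bound are compared through |adj A w|^2 = <A (adj A w), w>. *)
lemma opnorm_adj_le:
  assumes A: "A \<in> carrier_mat r c"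
  shows "opnorm (adj A) \<le> opnorm A"
proof (rule opnorm_leI[OF opnorm_nonneg])
  fix w :: "complex vec" assume "w \<in> carrier_vec (dim_col (adj A))"
  then have w: "w \<in> carrier_vec r" using A by simp
  define x where "x = adj A *\<^sub>v w"
  have x: "x \<in> carrier_vec c" unfolding x_def using adj_carrier[OF A] w by (rule mult_mat_vec_carrier)
  have "complex_of_real ((vnorm x)^2) = (A *\<^sub>v x) \<bullet>c w"
    using cscalar_prod_mult_mat_vec[OF A x w] by (simp add: cscalar_prod_self x_def)
  then have "(vnorm x)^2 = cmod ((A *\<^sub>v x) \<bullet>c w)"
    by (metis norm_of_real abs_of_nonneg zero_le_power2)
  also have "\<dots> \<le> vnorm (A *\<^sub>v x) * vnorm w"
    using A w by (intro cmod_cscalar_prod_le) auto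
  also have "\<dots> \<le> (opnorm A * vnorm x) * vnorm w"
    using A x by (intro mult_right_mono vnorm_mult_mat_vec_le vnorm_nonneg) auto
  finally have "vnorm x * vnorm x \<le> vnorm x * (opnorm A * vnorm w)"
    by (simp add: power2_eq_square algebra_simps)
  then show "vnorm (adj A *\<^sub>v w) \<le> opnorm A * vnorm w"
    using vnorm_nonneg[of x] opnorm_nonneg[of A] vnorm_nonneg[of w]
    unfolding x_def[symmetric] by (cases "vnorm x = 0") auto
qed

lemma opnorm_unitary_le:
  assumes "unitary n U"
  shows "opnorm U \<le> 1"
proof (rule opnorm_leI)
  have U: "U \<in> carrier_mat n n" and UU: "adj U * U = 1\<^sub>m n"
    using assms by (auto simp: unitary_def)
  fix v :: "complex vec" assume "v \<in> carrier_vec (dim_col U)"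
  then have v: "v \<in> carrier_vec n" using U by simp
  have "complex_of_real ((vnorm (U *\<^sub>v v))^2) = v \<bullet>c (adj U *\<^sub>v (U *\<^sub>v v))"
    using cscalar_prod_mult_mat_vec[OF U v, of "U *\<^sub>v v"] U v by (simp add: cscalar_prod_self)
  also have "adj U *\<^sub>v (U *\<^sub>v v) = v"
    using assoc_mult_mat_vec[of "adj U" n n U n v] U v UU by simp
  finally have "(vnorm (U *\<^sub>v v))^2 = (vnorm v)^2"
    unfolding cscalar_prod_self of_real_eq_iff .
  then show "vnorm (U *\<^sub>v v) \<le> 1 * vnorm v"
    by (simp add: vnorm_nonneg power2_eq_imp_eq)
qed simp

lemma opnorm_orth_proj_le:
  assumes "orth_proj n Q"
  shows "opnorm Q \<le> 1"
proof (rule opnorm_leI)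
  have Q: "Q \<in> carrier_mat n n" and h: "adj Q = Q" and QQ: "Q * Q = Q"
    using assms by (auto simp: orth_proj_def hermitian_def)
  fix v :: "complex vec" assume "v \<in> carrier_vec (dim_col Q)"
  then have v: "v \<in> carrier_vec n" using Q by simp
  have "complex_of_real ((vnorm (Q *\<^sub>v v))^2) = v \<bullet>c (adj Q *\<^sub>v (Q *\<^sub>v v))"
    using cscalar_prod_mult_mat_vec[OF Q v, of "Q *\<^sub>v v"] Q v by (simp add: cscalar_prod_self)
  also have "adj Q *\<^sub>v (Q *\<^sub>v v) = Q *\<^sub>v v"
    using assoc_mult_mat_vec[of Q n n Q n v] Q v QQ h by simp
  finally have "(vnorm (Q *\<^sub>v v))^2 = cmod (v \<bullet>c (Q *\<^sub>v v))"
    by (metis norm_of_real abs_of_nonneg zero_le_power2)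
  also have "\<dots> \<le> vnorm v * vnorm (Q *\<^sub>v v)"
    using Q v by (intro cmod_cscalar_prod_le) auto
  finally have "vnorm (Q *\<^sub>v v) * vnorm (Q *\<^sub>v v) \<le> vnorm (Q *\<^sub>v v) * vnorm v"
    by (simp add: power2_eq_square algebra_simps)
  then show "vnorm (Q *\<^sub>v v) \<le> 1 * vnorm v"
    using vnorm_nonneg[of "Q *\<^sub>v v"] by (cases "vnorm (Q *\<^sub>v v) = 0") (auto simp: vnorm_nonneg)
qed simp


section \<open>Kronecker products\<close>

lemma sum_nat_mult_split: "(\<Sum>k<n * m. f k) = (\<Sum>a<n. \<Sum>b<m. f (a * m + b :: nat))"
proof -
  have shift: "sum f {k..<k + m} = (\<Sum>b<m. f (k + b))" for k
    using sum.shift_bounds_nat_ivl[of f 0 k m] by (simp add: add.commute lessThan_atLeast0)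
  have "sum f {..<n * m} = (\<Sum>a<n. sum f {a * m..<a * m + m})"
    by (rule sum.nat_group[symmetric])
  then show ?thesis by (simp add: shift)
qed

lemma mult_add_less_mult: "a < n \<Longrightarrow> b < m \<Longrightarrow> a * m + b < n * (m :: nat)"
proof -
  assume a: "a < n" and b: "b < m"
  have "a * m + b < Suc a * m" using b by simp
  also have "\<dots> \<le> n * m" using a by (intro mult_le_mono1) simp
  finally show ?thesis .
qed

lemma div_mod_less_mult:
  assumes "i < n * (m :: nat)"
  shows "i div m < n" and "i mod m < m"
proof -
  have "0 < m" using assms by (cases m) auto
  then show "i div m < n" and "i mod m < m"
    using assms by (auto simp: less_mult_imp_div_less)
qed

lemma kron_dims [simp]:
  "dim_row (kron A B) = dim_row A * dim_row B" "dim_col (kron A B) = dim_col A * dim_col B"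
  by (auto simp: kron_def)

lemma kron_index [simp]:
  "i < dim_row A * dim_row B \<Longrightarrow> j < dim_col A * dim_col B \<Longrightarrow>
   kron A B $$ (i,j) = A $$ (i div dim_row B, j div dim_col B) * B $$ (i mod dim_row B, j mod dim_col B)"
  by (simp add: kron_def)

lemma kron_carrier [simp]:
  "A \<in> carrier_mat n n \<Longrightarrow> B \<in> carrier_mat m m \<Longrightarrow> kron A B \<in> carrier_mat (n * m) (n * m)"
  unfolding carrier_mat_def by simp

lemma kron_mult:
  assumes A: "A \<in> carrier_mat n n" and B: "B \<in> carrier_mat m m"
    and C: "C \<in> carrier_mat n n" and D: "D \<in> carrier_mat m m"
  shows "kron A B * kron C D = kron (A * C) (B * D)"
proof (rule eq_matI)
  fix i j assume "i < dim_row (kron (A * C) (B * D))" and "j < dim_col (kron (A * C) (B * D))"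
  then have i: "i < n * m" and j: "j < n * m" using A B C D by auto
  have "(kron A B * kron C D) $$ (i,j) = (\<Sum>k<n * m. kron A B $$ (i,k) * kron C D $$ (k,j))"
    using A B C D i j by (simp add: scalar_prod_def lessThan_atLeast0)
  also have "\<dots> = (\<Sum>a<n. \<Sum>b<m. kron A B $$ (i, a * m + b) * kron C D $$ (a * m + b, j))"
    by (rule sum_nat_mult_split)
  also have "\<dots> = (\<Sum>a<n. \<Sum>b<m. (A $$ (i div m, a) * C $$ (a, j div m)) * (B $$ (i mod m, b) * D $$ (b, j mod m)))"
    using A B C D i j by (intro sum.cong refl) (simp add: mult_add_less_mult)
  also have "\<dots> = (\<Sum>a<n. A $$ (i div m, a) * C $$ (a, j div m)) * (\<Sum>b<m. B $$ (i mod m, b) * D $$ (b, j mod m))"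
    by (simp add: sum_product)
  also have "\<dots> = kron (A * C) (B * D) $$ (i,j)"
    using A B C D i j div_mod_less_mult[OF i] div_mod_less_mult[OF j]
    by (simp add: scalar_prod_def lessThan_atLeast0)
  finally show "(kron A B * kron C D) $$ (i,j) = kron (A * C) (B * D) $$ (i,j)" .
qed (use A B C D in auto)

lemma kron_one: "kron (1\<^sub>m n) (1\<^sub>m m) = 1\<^sub>m (n * m)"
proof (rule eq_matI)
  fix i j assume "i < dim_row (1\<^sub>m (n * m))" and "j < dim_col (1\<^sub>m (n * m))"
  then have i: "i < n * m" and j: "j < n * m" by auto
  have "(i div m = j div m \<and> i mod m = j mod m) = (i = j)"
    by (metis div_mult_mod_eq)
  then show "kron (1\<^sub>m n) (1\<^sub>m m) $$ (i,j) = 1\<^sub>m (n * m) $$ (i,j)"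
    using i j div_mod_less_mult[OF i] div_mod_less_mult[OF j] by auto
qed auto

lemma kron_minus:
  assumes "A \<in> carrier_mat n n" and "B \<in> carrier_mat m m" and "C \<in> carrier_mat m m"
  shows "kron A (B - C) = kron A B - kron A C"
  using assms div_mod_less_mult by (intro eq_matI) (auto simp: algebra_simps)

lemma adj_kron:
  assumes "A \<in> carrier_mat n n" and "B \<in> carrier_mat m m"
  shows "adj (kron A B) = kron (adj A) (adj B)"
  using assms div_mod_less_mult by (intro eq_matI) auto

lemma kron_one_complement:
  assumes "P \<in> carrier_mat m m"
  shows "kron (1\<^sub>m n) (1\<^sub>m m - P) = 1\<^sub>m (n * m) - kron (1\<^sub>m n) P"
  using kron_minus[of "1\<^sub>m n" n "1\<^sub>m m" m P] kron_one[of n m] assms by simp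

lemma orth_proj_kron_one:
  assumes "orth_proj m P"
  shows "orth_proj (n * m) (kron (1\<^sub>m n) P)"
  using assms adj_kron[of "1\<^sub>m n" n P m] kron_mult[of "1\<^sub>m n" n P m "1\<^sub>m n" P]
  by (auto simp: orth_proj_def hermitian_def)

(* H (x) I acts on C^n (x) C^m as m independent copies of H, one for each slice
   a |-> v (j * m + a). *)
lemma opnorm_kron_one_le:
  assumes H: "H \<in> carrier_mat n n"
  shows "opnorm (kron H (1\<^sub>m m)) \<le> opnorm H"
proof (rule opnorm_leI[OF opnorm_nonneg])
  fix v :: "complex vec" assume "v \<in> carrier_vec (dim_col (kron H (1\<^sub>m m)))"
  then have v: "v \<in> carrier_vec (n * m)" using H by simp
  define w where "w a = vec n (\<lambda>j. v $ (j * m + a))" for a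
  have slice: "(kron H (1\<^sub>m m) *\<^sub>v v) $ (i * m + a) = (H *\<^sub>v w a) $ i" if i: "i < n" and a: "a < m" for i a
  proof -
    have "(kron H (1\<^sub>m m) *\<^sub>v v) $ (i * m + a) = (\<Sum>k<n * m. kron H (1\<^sub>m m) $$ (i * m + a, k) * v $ k)"
      using H v mult_add_less_mult[OF i a] by (simp add: scalar_prod_def lessThan_atLeast0)
    also have "\<dots> = (\<Sum>j<n. \<Sum>b<m. kron H (1\<^sub>m m) $$ (i * m + a, j * m + b) * v $ (j * m + b))"
      by (rule sum_nat_mult_split)
    also have "\<dots> = (\<Sum>j<n. \<Sum>b<m. (if b = a then H $$ (i,j) * v $ (j * m + b) else 0))"
      using H i a by (intro sum.cong refl) (auto simp: mult_add_less_mult)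
    also have "\<dots> = (H *\<^sub>v w a) $ i"
      using H i a by (simp add: scalar_prod_def lessThan_atLeast0 w_def)
    finally show ?thesis .
  qed
  have "(vnorm (kron H (1\<^sub>m m) *\<^sub>v v))^2 = (\<Sum>k<n * m. (cmod ((kron H (1\<^sub>m m) *\<^sub>v v) $ k))^2)"
    using H by (simp add: vnorm_square)
  also have "\<dots> = (\<Sum>i<n. \<Sum>a<m. (cmod ((kron H (1\<^sub>m m) *\<^sub>v v) $ (i * m + a)))^2)"
    by (rule sum_nat_mult_split)
  also have "\<dots> = (\<Sum>a<m. \<Sum>i<n. (cmod ((H *\<^sub>v w a) $ i))^2)"
    using slice by (subst sum.swap) (intro sum.cong refl, auto)
  also have "\<dots> = (\<Sum>a<m. (vnorm (H *\<^sub>v w a))^2)"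
    using H by (simp add: vnorm_square)
  also have "\<dots> \<le> (\<Sum>a<m. (opnorm H * vnorm (w a))^2)"
    using H by (intro sum_mono power_mono vnorm_mult_mat_vec_le vnorm_nonneg) (auto simp: w_def)
  also have "\<dots> = (opnorm H)^2 * (\<Sum>j<n. \<Sum>a<m. (cmod (v $ (j * m + a)))^2)"
    by (simp add: power_mult_distrib sum_distrib_left vnorm_square w_def sum.swap[of _ "{..<m}"])
  also have "\<dots> = (opnorm H * vnorm v)^2"
    using v by (simp add: vnorm_square sum_nat_mult_split power_mult_distrib)
  finally show "vnorm (kron H (1\<^sub>m m) *\<^sub>v v) \<le> opnorm H * vnorm v"
    by (rule power2_le_imp_le) (simp add: opnorm_nonneg vnorm_nonneg)
qed

lemma opnorm_kron_orth_proj_le: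
  assumes H: "H \<in> carrier_mat n n" and P: "orth_proj m P"
  shows "opnorm (kron H P) \<le> opnorm H"
proof -
  have Pc: "P \<in> carrier_mat m m" using P by (simp add: orth_proj_def hermitian_def)
  have "kron H P = kron H (1\<^sub>m m) * kron (1\<^sub>m n) P"
    using kron_mult[of H n "1\<^sub>m m" m "1\<^sub>m n" P] H Pc by simp
  also have "opnorm \<dots> \<le> opnorm H * 1"
    using H Pc opnorm_kron_one_le[OF H] opnorm_orth_proj_le[OF orth_proj_kron_one[OF P]]
    by (intro opnorm_mult_bounded[of _ "n * m" "n * m"]) auto
  finally show ?thesis by simp
qed

section \<open>Compressions by a direct rotation\<close>

lemma opnorm_summand_le:
  assumes "X \<in> carrier_mat r c" "M \<in> carrier_mat r c" "A \<in> carrier_mat r c"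
    "B \<in> carrier_mat r c" "C \<in> carrier_mat r c" and sum: "X = M + A + B + C"
  shows "opnorm M \<le> opnorm X + opnorm A + opnorm B + opnorm C"
proof -
  have "M = X - A - B - C"
    using assms by (intro eq_matI) auto
  also have "opnorm \<dots> \<le> opnorm (X - A - B) + opnorm C"
    using assms by (intro opnorm_diff_le[of _ r c]) (auto simp: minus_carrier_mat)
  also have "opnorm (X - A - B) \<le> opnorm (X - A) + opnorm B"
    using assms by (intro opnorm_diff_le[of _ r c]) (auto simp: minus_carrier_mat)
  also have "opnorm (X - A) \<le> opnorm X + opnorm A"
    using assms by (intro opnorm_diff_le[of _ r c]) auto
  finally show ?thesis by simp
qed

lemma opnorm_compression_cross_term_le:
  assumes Q: "orth_proj N Q" and H: "hermitian N H" and D: "D \<in> carrier_mat N N"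
  shows "opnorm (Q * D * H * Q) \<le> opnorm (Q * D * Q) * opnorm H + opnorm D * opnorm (Q * H * (1\<^sub>m N - Q))"
proof -
  define Q' where "Q' = 1\<^sub>m N - Q"
  have [simp]: "Q \<in> carrier_mat N N" "adj Q = Q" "H \<in> carrier_mat N N" "adj H = H"
    "Q' \<in> carrier_mat N N" "adj Q' = Q'"
    using Q H orth_proj_complement[OF Q]
    by (auto simp: orth_proj_def hermitian_def Q'_def minus_carrier_mat)
  have nQ: "opnorm Q \<le> 1" by (rule opnorm_orth_proj_le[OF Q])
  have "Q + Q' = 1\<^sub>m N"
    unfolding Q'_def using carrier_matD[of Q N N] by (intro eq_matI) auto
  then have "Q * D * H * Q = Q * D * (Q + Q') * H * Q"
    using D by (simp add: square_mat_algebra[where N=N] minus_carrier_mat)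
  also have "\<dots> = (Q * D * Q) * (H * Q) + (Q * D) * adj (Q * H * Q')"
    using D by (simp add: square_mat_algebra[where N=N] adj_mult[of _ N N _ N])
  finally have split: "Q * D * H * Q = (Q * D * Q) * (H * Q) + (Q * D) * adj (Q * H * Q')" .
  have "opnorm ((Q * D * Q) * (H * Q)) \<le> opnorm (Q * D * Q) * (opnorm H * 1)"
    using D nQ by (intro opnorm_mult_bounded[of _ N N _ N]) auto
  moreover have "opnorm ((Q * D) * adj (Q * H * Q')) \<le> (1 * opnorm D) * opnorm (Q * H * Q')"
    using D nQ opnorm_adj_le[of "Q * H * Q'" N N]
    by (intro opnorm_mult_bounded[of _ N N _ N]) auto
  ultimately show ?thesis
    unfolding split Q'_def[symmetric]
    using D opnorm_add_le[of "(Q * D * Q) * (H * Q)" N N "(Q * D) * adj (Q * H * Q')"] by simp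
qed

(* The defining identity U^2 = R2 R1 with R2 = U R1 (adj U) gives U = R1 (adj U) R1, and R1 acts
   as -1 on the range of Q. *)
lemma direct_rotation_compression_adj:
  assumes U: "unitary N U" and rot: "direct_rotation N Q (U * Q * adj U) U"
  shows "Q * U * Q = Q * adj U * Q"
proof -
  define R where "R = 1\<^sub>m N - 2 \<cdot>\<^sub>m Q"
  have [simp]: "U \<in> carrier_mat N N" "U * adj U = 1\<^sub>m N" "adj U * U = 1\<^sub>m N"
    "Q \<in> carrier_mat N N" "Q * Q = Q" "R \<in> carrier_mat N N"
    using U rot by (auto simp: unitary_def direct_rotation_def orth_proj_def hermitian_def R_def minus_carrier_mat)
  have R2: "1\<^sub>m N - 2 \<cdot>\<^sub>m (U * Q * adj U) = U * R * adj U"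
    by (simp add: R_def square_mat_algebra[where N=N] minus_carrier_mat)
  have "U * U = (1\<^sub>m N - 2 \<cdot>\<^sub>m (U * Q * adj U)) * R"
    using rot by (simp add: direct_rotation_def R_def)
  then have "U * U = U * R * adj U * R"
    by (simp only: R2)
  then have UU: "U * U = U * (R * adj U * R)"
    by (simp add: square_mat_algebra[where N=N])
  have UR: "U = R * adj U * R"
  proof -
    have "U = adj U * (U * U)" by (rule unitary_adj_mult_cancel[OF U, symmetric]) simp
    also have "U * U = U * (R * adj U * R)" by (rule UU)
    also have "adj U * (U * (R * adj U * R)) = R * adj U * R" by (rule unitary_adj_mult_cancel[OF U]) simp
    finally show ?thesis .
  qed
  have QR: "Q * R = (-1) \<cdot>\<^sub>m Q" and RQ: "R * Q = (-1) \<cdot>\<^sub>m Q"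
    by (simp_all add: R_def square_mat_algebra[where N=N] minus_carrier_mat) (intro eq_matI; auto)+
  have "Q * U * Q = (Q * R) * adj U * (R * Q)"
    by (subst UR) (simp add: square_mat_algebra[where N=N] minus_carrier_mat)
  also have "\<dots> = Q * adj U * Q"
    unfolding QR RQ by (simp add: square_mat_algebra[where N=N] minus_carrier_mat) (intro eq_matI; auto)
  finally show ?thesis .
qed

(* With E = U - I one has adj E * E = - E - adj E, and Q E Q = Q (adj E) Q by the previous
   lemma; hence Q (adj E) E Q = -2 Q (adj E) Q. *)
lemma direct_rotation_compression_deviation_le:
  assumes U: "unitary N U" and rot: "direct_rotation N Q (U * Q * adj U) U"
  shows "opnorm (Q * adj (U - 1\<^sub>m N) * Q) \<le> opnorm (U - 1\<^sub>m N)^2 / 2"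
proof -
  define E where "E = U - 1\<^sub>m N"
  have [simp]: "U \<in> carrier_mat N N" "adj U * U = 1\<^sub>m N" "Q \<in> carrier_mat N N" "Q * Q = Q"
    "E \<in> carrier_mat N N"
    using U rot by (auto simp: unitary_def direct_rotation_def orth_proj_def hermitian_def E_def minus_carrier_mat)
  have adjE: "adj E = adj U - 1\<^sub>m N"
    unfolding E_def by (simp add: adj_minus[of _ N N])
  have "adj E * E = 1\<^sub>m N - U - (adj U - 1\<^sub>m N)"
    unfolding adjE unfolding E_def by (simp add: square_mat_algebra[where N=N] minus_carrier_mat)
  then have "Q * (adj E * E) * Q = Q - Q * U * Q - (Q * adj U * Q - Q)"
    by (simp add: square_mat_algebra[where N=N] minus_carrier_mat)
  also have "\<dots> = (-2) \<cdot>\<^sub>m (Q * adj E * Q)"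
    unfolding direct_rotation_compression_adj[OF U rot] adjE
    by (simp add: square_mat_algebra[where N=N] minus_carrier_mat) (intro eq_matI; auto)
  finally have EE: "Q * (adj E * E) * Q = (-2) \<cdot>\<^sub>m (Q * adj E * Q)" .
  have "Q * adj E * Q = (-1/2) \<cdot>\<^sub>m ((Q * adj E) * (E * Q))"
    using EE by (simp add: square_mat_algebra[where N=N]) (intro eq_matI; auto)
  also have "opnorm \<dots> \<le> cmod (-1/2) * ((1 * opnorm E) * (opnorm E * 1))"
    using opnorm_orth_proj_le[of N Q] opnorm_adj_le[of E N N] rot
    by (intro order.trans[OF opnorm_smult_le] mult_left_mono opnorm_mult_bounded[of _ N N _ N])
       (auto simp: direct_rotation_def)
  finally show ?thesis
    unfolding E_def[symmetric] by (simp add: power2_eq_square)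
qed

lemma opnorm_compression_le_rotated:
  assumes U: "unitary N U" and rot: "direct_rotation N Q (U * Q * adj U) U" and H: "hermitian N H"
  shows "opnorm (Q * H * Q) \<le> opnorm (Q * adj U * H * U * Q)
    + 2 * opnorm (U - 1\<^sub>m N) * opnorm (Q * H * (1\<^sub>m N - Q)) + 2 * opnorm (U - 1\<^sub>m N)^2 * opnorm H"
proof -
  define E where "E = U - 1\<^sub>m N"
  define T where "T = Q * adj E * H * Q"
  have Q: "orth_proj N Q" using rot by (simp add: direct_rotation_def)
  have [simp]: "U \<in> carrier_mat N N" "Q \<in> carrier_mat N N" "adj Q = Q" "H \<in> carrier_mat N N"
    "adj H = H" "E \<in> carrier_mat N N" "T \<in> carrier_mat N N"
    using U Q H by (auto simp: unitary_def orth_proj_def hermitian_def E_def T_def minus_carrier_mat)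
  have adjE: "adj E = adj U - 1\<^sub>m N"
    unfolding E_def by (simp add: adj_minus[of _ N N])
  have adjT: "adj T = Q * H * E * Q"
    unfolding T_def by (simp add: adj_mult[of _ N N _ N] square_mat_algebra[where N=N])
  have "U = 1\<^sub>m N + E" and "adj U = 1\<^sub>m N + adj E"
    unfolding adjE unfolding E_def using carrier_matD[of U N N] by (intro eq_matI; auto)+
  then have "Q * adj U * H * U * Q = Q * (1\<^sub>m N + adj E) * H * (1\<^sub>m N + E) * Q"
    by (simp only: flip: \<open>U = 1\<^sub>m N + E\<close>)
  also have "\<dots> = Q * H * Q + T + adj T + Q * adj E * H * E * Q"
    unfolding adjT unfolding T_def by (simp add: square_mat_algebra[where N=N] assoc_add_mat[of _ N N])
  finally have expand: "Q * adj U * H * U * Q = Q * H * Q + T + adj T + Q * adj E * H * E * Q" .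
  have "opnorm T \<le> opnorm (Q * adj E * Q) * opnorm H + opnorm (adj E) * opnorm (Q * H * (1\<^sub>m N - Q))"
    unfolding T_def by (intro opnorm_compression_cross_term_le Q H) simp
  also have "\<dots> \<le> opnorm E^2 / 2 * opnorm H + opnorm E * opnorm (Q * H * (1\<^sub>m N - Q))"
    using direct_rotation_compression_deviation_le[OF U rot, folded E_def] opnorm_adj_le[of E N N]
    by (intro add_mono mult_right_mono) (auto simp: opnorm_nonneg)
  finally have nT: "opnorm T \<le> opnorm E^2 / 2 * opnorm H + opnorm E * opnorm (Q * H * (1\<^sub>m N - Q))" .
  have "opnorm (Q * adj E * H * E * Q) \<le> 1 * opnorm E * opnorm H * opnorm E * 1"
    using opnorm_orth_proj_le[OF Q] opnorm_adj_le[of E N N]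
    by (intro opnorm_mult_bounded[of _ N N _ N]) auto
  then have nT3: "opnorm (Q * adj E * H * E * Q) \<le> opnorm E^2 * opnorm H"
    by (simp add: power2_eq_square mult.commute mult.left_commute)
  have "opnorm (Q * H * Q) \<le> opnorm (Q * adj U * H * U * Q) + opnorm T + opnorm (adj T)
      + opnorm (Q * adj E * H * E * Q)"
    by (rule opnorm_summand_le[OF _ _ _ _ _ expand, of N N]) simp_all
  then show ?thesis
    using nT nT3 opnorm_adj_le[of T N N] unfolding E_def[symmetric] by simp
qed

lemma gadget_rotated_compression_le:
  assumes g: "gadget_with n m H H' \<eta> \<epsilon> P U"
    and H: "H \<in> carrier_mat n n" and H': "H' \<in> carrier_mat (n * m) (n * m)"
  shows "opnorm (kron (1\<^sub>m n) P * adj U * H' * U * kron (1\<^sub>m n) P) \<le> opnorm H + \<epsilon>"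
proof -
  define N where "N = n * m"
  define Q where "Q = kron (1\<^sub>m n) P"
  define Y where "Y = U * Q * adj U * H' * (U * Q * adj U)"
  have P: "orth_proj m P" and U: "unitary N U"
    and eps: "opnorm (Y - U * kron H P * adj U) \<le> \<epsilon>"
    using g by (simp_all add: gadget_with_def N_def Q_def Y_def)
  have [simp]: "U \<in> carrier_mat N N" "adj U * U = 1\<^sub>m N" "Q \<in> carrier_mat N N"
    "H' \<in> carrier_mat N N" "kron H P \<in> carrier_mat N N" "Y \<in> carrier_mat N N"
    using U P H H' by (auto simp: unitary_def orth_proj_def hermitian_def N_def Q_def Y_def)
  have nU: "opnorm U \<le> 1" and nU': "opnorm (adj U) \<le> 1"
    using opnorm_unitary_le[OF U] opnorm_unitary_le[OF unitary_adj[OF U]] by auto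
  have "Q * adj U * H' * U * Q = adj U * Y * U"
    by (simp add: Y_def square_mat_algebra[where N=N] unitary_adj_mult_cancel[OF U])
  also have "opnorm \<dots> \<le> 1 * opnorm Y * 1"
    using nU nU' by (intro opnorm_mult_bounded[of _ N N _ N]) auto
  also have "opnorm Y \<le> opnorm (Y - U * kron H P * adj U) + opnorm (U * kron H P * adj U)"
    by (intro opnorm_le_diff_add[of _ N N]) auto
  also have "opnorm (U * kron H P * adj U) \<le> 1 * opnorm H * 1"
    using nU nU' opnorm_kron_orth_proj_le[OF H P] by (intro opnorm_mult_bounded[of _ N N _ N]) auto
  finally show ?thesis
    using eps by (simp add: Q_def)
qed

theorem lemma14:
  "\<exists>C::real. \<forall>(n::nat) (m::nat) H H' P U \<eta> \<epsilon> J' JO'.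
     hermitian n H \<longrightarrow> hermitian (n*m) H' \<longrightarrow>
     gadget_with n m H H' \<eta> \<epsilon> P U \<longrightarrow>
     direct_rotation (n*m) (kron (1\<^sub>m n) P) (U * kron (1\<^sub>m n) P * adj U) U \<longrightarrow>
     opnorm H' \<le> J' \<longrightarrow>
     opnorm (kron (1\<^sub>m n) P * H' * kron (1\<^sub>m n) (1\<^sub>m m - P)) \<le> JO' \<longrightarrow>
     opnorm (kron (1\<^sub>m n) P * H' * kron (1\<^sub>m n) P)
       \<le> opnorm H + C * (\<epsilon> + \<eta> * JO' + \<eta>^2 * J')"
proof (intro exI[of _ 2] allI impI)
  fix n m :: nat and H H' P U :: "complex mat" and \<eta> \<epsilon> J' JO' :: real
  assume H: "hermitian n H" and H': "hermitian (n*m) H'" and g: "gadget_with n m H H' \<eta> \<epsilon> P U"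
    and rot: "direct_rotation (n*m) (kron (1\<^sub>m n) P) (U * kron (1\<^sub>m n) P * adj U) U"
    and J': "opnorm H' \<le> J'"
    and JO': "opnorm (kron (1\<^sub>m n) P * H' * kron (1\<^sub>m n) (1\<^sub>m m - P)) \<le> JO'"
  define Q where "Q = kron (1\<^sub>m n) P"
  define \<delta> where "\<delta> = opnorm (U - 1\<^sub>m (n*m))"
  have U: "unitary (n*m) U" and \<delta>: "\<delta> \<le> \<eta>" and P: "P \<in> carrier_mat m m"
    and eps: "opnorm (Q * adj U * H' * U * Q) \<le> opnorm H + \<epsilon>"
    using g gadget_rotated_compression_le[OF g] H H'
    by (auto simp: gadget_with_def orth_proj_def hermitian_def \<delta>_def Q_def)
  have eps0: "0 \<le> \<epsilon>"
    using g opnorm_nonneg by (auto simp: gadget_with_def intro: order.trans)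
  have off: "opnorm (Q * H' * (1\<^sub>m (n*m) - Q)) \<le> JO'"
    using JO' by (simp add: Q_def kron_one_complement[OF P])
  have "opnorm (Q * H' * Q) \<le> opnorm (Q * adj U * H' * U * Q)
      + 2 * \<delta> * opnorm (Q * H' * (1\<^sub>m (n*m) - Q)) + 2 * \<delta>^2 * opnorm H'"
    unfolding \<delta>_def Q_def by (rule opnorm_compression_le_rotated[OF U rot H'])
  also have "\<dots> \<le> (opnorm H + \<epsilon>) + 2 * \<eta> * JO' + 2 * \<eta>^2 * J'"
    using eps \<delta> off J' opnorm_nonneg[of "U - 1\<^sub>m (n*m)"] opnorm_nonneg[of H'] opnorm_nonneg[of "Q * H' * (1\<^sub>m (n*m) - Q)"]
    by (intro add_mono mult_mono mult_left_mono power_mono) (auto simp: \<delta>_def)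
  also have "\<dots> \<le> opnorm H + 2 * (\<epsilon> + \<eta> * JO' + \<eta>^2 * J')"
    using eps0 by (simp add: algebra_simps)
  finally show "opnorm (kron (1\<^sub>m n) P * H' * kron (1\<^sub>m n) P) \<le> opnorm H + 2 * (\<epsilon> + \<eta> * JO' + \<eta>^2 * J')"
    by (simp add: Q_def)
qed

end
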